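(* Let $\eta,\theta\in\mathbb{R}$, $\sigma,\tau\ge0$ with $\sigma\tau\ne1$, and fix $t>0$. Suppose $(c_k)_{k\ge1}$ is a real sequence with $c_1=1$ satisfying, for every $k\ge2$, $$c_{k+1}=\frac{\theta-\eta t}{1+\sigma t}c_k+\frac{t+\tau}{1+\sigma t}\Big(\sum_{j=1}^{k-1}c_jc_{k-j}+\eta\sum_{j=0}^{k-1}c_{j+1}c_{k-j}+\sigma\sum_{j=0}^{k-1}c_{j+2}c_{k-j}\Big).$$ Then for every $p>1$ there exists a constant $M$ such that $|c_k|\le \dfrac{M^{k-2}}{k^p}$ for all $k\ge3$. *)

theory Defs
  imports Complex_Main
begin

end

theory Submission
  imports Defs
begin

text \<open>
  The last sum of the recurrence contains the term \<open>c (k + 1) * c 1\<close>; moving it to the left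
  leaves the coefficient \<open>(1 - \<sigma> * \<tau>) / (1 + \<sigma> * t) \<noteq> 0\<close>, so \<open>c (k + 1)\<close> is controlled by
  earlier terms. Strong induction then gives \<open>\<bar>c k\<bar> \<le> D * M ^ (k - 2) / k\<^sup>2\<close> for \<open>k \<ge> 2\<close>: the
  weight \<open>1 / k\<^sup>2\<close> survives the quadratic terms because its self-convolution
  \<open>\<Sum>j. 1 / (j\<^sup>2 * (n - j)\<^sup>2)\<close> is still at most \<open>8 / n\<^sup>2\<close>. Finally any geometric bound gives the
  claim for every \<open>p \<ge> 0\<close>, since \<open>k powr p \<le> (3 powr p) ^ (k - 2)\<close> for \<open>k \<ge> 3\<close>.
\<close>

definition inv_sq :: "nat \<Rightarrow> real" where
  "inv_sq i = 1 / (real i)\<^sup>2"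

lemma inv_sq_nonneg: "0 \<le> inv_sq i"
  by (simp add: inv_sq_def)

lemma inv_sq_le_1: "1 \<le> i \<Longrightarrow> inv_sq i \<le> 1"
  by (simp add: inv_sq_def)

lemma inv_sq_antimono: "1 \<le> i \<Longrightarrow> i \<le> j \<Longrightarrow> inv_sq j \<le> inv_sq i"
  unfolding inv_sq_def by (simp add: frac_le power_mono)

lemma inv_sq_le_4_inv_sq_Suc:
  assumes "1 \<le> i" shows "inv_sq i \<le> 4 * inv_sq (Suc i)"
proof -
  have "(real i + 1)\<^sup>2 \<le> (2 * real i)\<^sup>2"
    using assms by (intro power_mono) auto
  then show ?thesis
    using assms by (simp add: inv_sq_def field_simps)
qed

lemma sum_inv_sq_le: "(\<Sum>i=1..n. inv_sq i) \<le> 2"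
proof -
  have "(\<Sum>i=1..n. inv_sq i) \<le> 2 - 1 / real n" if "1 \<le> n"
    using that
  proof (induction n rule: nat_induct_at_least)
    case base
    then show ?case by (simp add: inv_sq_def)
  next
    case (Suc n)
    have "1 / (real n + 1)\<^sup>2 \<le> 1 / (real n * (real n + 1))"
      using Suc.hyps by (intro divide_left_mono) (auto simp: power2_eq_square)
    also have "\<dots> = 1 / real n - 1 / real (Suc n)"
      using Suc.hyps by (simp add: field_simps)
    finally show ?case
      using Suc.IH by (simp add: inv_sq_def add.commute)
  qed
  then show ?thesis
    by (cases "n = 0") (auto intro: order_trans)
qed

lemma inverse_square_mult_le:
  fixes x y :: real assumes "0 < x" "0 < y"
  shows "1 / x\<^sup>2 * (1 / y\<^sup>2) \<le> 2 / (x + y)\<^sup>2 * (1 / x\<^sup>2 + 1 / y\<^sup>2)"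
proof -
  have "(x + y)\<^sup>2 \<le> 2 * (x\<^sup>2 + y\<^sup>2)"
    using zero_le_power2[of "x - y"] by (simp add: power2_diff power2_sum)
  with assms show ?thesis
    by (simp add: field_simps)
qed

lemma inv_sq_conv_le:
  assumes "1 \<le> a"
  shows "(\<Sum>i=a..n-a. inv_sq i * inv_sq (n - i)) \<le> 8 * inv_sq n"
proof -
  have "(\<Sum>i=a..n-a. inv_sq i * inv_sq (n - i)) \<le> (\<Sum>i=1..n-1. inv_sq i * inv_sq (n - i))"
    using assms by (intro sum_mono2) (auto intro: mult_nonneg_nonneg inv_sq_nonneg)
  also have "\<dots> \<le> (\<Sum>i=1..n-1. 2 / (real n)\<^sup>2 * (inv_sq i + inv_sq (n - i)))"
  proof (rule sum_mono)
    fix i assume "i \<in> {1..n-1}"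
    then have "0 < real i" "0 < real (n - i)" "real i + real (n - i) = real n"
      by auto
    then show "inv_sq i * inv_sq (n - i) \<le> 2 / (real n)\<^sup>2 * (inv_sq i + inv_sq (n - i))"
      unfolding inv_sq_def by (metis inverse_square_mult_le)
  qed
  also have "\<dots> = 2 / (real n)\<^sup>2 * ((\<Sum>i=1..n-1. inv_sq i) + (\<Sum>i=1..n-1. inv_sq (n - i)))"
    by (simp only: sum.distrib sum_distrib_left[symmetric] distrib_left)
  also have "(\<Sum>i=1..n-1. inv_sq (n - i)) = (\<Sum>i=1..n-1. inv_sq i)"
    by (rule sum.reindex_bij_witness[where i = "\<lambda>i. n - i" and j = "\<lambda>i. n - i"]) auto
  also have "(\<Sum>i=1..n-1. inv_sq i) \<le> 2"
    by (rule sum_inv_sq_le)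
  then have "2 / (real n)\<^sup>2 * ((\<Sum>i=1..n-1. inv_sq i) + (\<Sum>i=1..n-1. inv_sq i)) \<le> 2 / (real n)\<^sup>2 * 4"
    by (intro mult_left_mono) auto
  finally show ?thesis
    by (simp add: inv_sq_def)
qed

text \<open>\<open>conv c 1 n\<close> is the \<open>n\<close>-th coefficient of the square of \<open>\<Sum>k\<ge>1. c k * x ^ k\<close>;
  \<open>conv c 2 n\<close> drops the two terms containing \<open>c 1\<close>.\<close>

definition conv :: "(nat \<Rightarrow> real) \<Rightarrow> nat \<Rightarrow> nat \<Rightarrow> real" where
  "conv c a n = (\<Sum>i=a..n-a. c i * c (n - i))"

lemma abs_conv_le:
  assumes "1 \<le> a" "0 \<le> B"
    and "\<And>i. a \<le> i \<Longrightarrow> i \<le> n - a \<Longrightarrow> \<bar>c i * c (n - i)\<bar> \<le> B * (inv_sq i * inv_sq (n - i))"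
  shows "\<bar>conv c a n\<bar> \<le> 8 * B * inv_sq n"
proof -
  have "\<bar>conv c a n\<bar> \<le> (\<Sum>i=a..n-a. \<bar>c i * c (n - i)\<bar>)"
    unfolding conv_def by (rule sum_abs)
  also have "\<dots> \<le> (\<Sum>i=a..n-a. B * (inv_sq i * inv_sq (n - i)))"
    using assms(3) by (intro sum_mono) auto
  also have "\<dots> = B * (\<Sum>i=a..n-a. inv_sq i * inv_sq (n - i))"
    by (simp add: sum_distrib_left)
  also have "\<dots> \<le> B * (8 * inv_sq n)"
    using assms(1,2) by (intro mult_left_mono inv_sq_conv_le)
  finally show ?thesis
    by simp
qed

lemma conv_one_Suc_eq_sum:
  assumes "1 \<le> k"
  shows "conv c 1 (k + 1) = (\<Sum>j=0..k-1. c (j + 1) * c (k - j))"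
  unfolding conv_def
  by (intro sum.reindex_bij_witness[where i = Suc and j = "\<lambda>i. i - 1"]) (use assms in auto)

lemma conv_two_Suc_Suc_eq_sum:
  assumes "1 \<le> k"
  shows "conv c 2 (k + 2) + c (k + 1) * c 1 = (\<Sum>j=0..k-1. c (j + 2) * c (k - j))"
proof -
  have "(\<Sum>j=0..k-1. c (j + 2) * c (k - j)) = (\<Sum>i=2..k+1. c i * c (k + 2 - i))"
    by (rule sum.reindex_bij_witness[where i = "\<lambda>i. i - 2" and j = "\<lambda>j. j + 2"]) (use assms in auto)
  also have "\<dots> = conv c 2 (k + 2) + c (k + 1) * c 1"
    using assms by (simp add: conv_def)
  finally show ?thesis ..
qed

lemma abs_recurrence_le:
  fixes c :: "nat \<Rightarrow> real"
  assumes "0 \<le> \<beta>" "0 \<le> \<sigma>" "c 1 = 1" "2 \<le> m"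
    and rec: "c (m + 1) = \<alpha> * c m
      + \<beta> * ((\<Sum>j=1..m-1. c j * c (m - j))
             + \<eta> * (\<Sum>j=0..m-1. c (j + 1) * c (m - j))
             + \<sigma> * (\<Sum>j=0..m-1. c (j + 2) * c (m - j)))"
  shows "\<bar>1 - \<beta> * \<sigma>\<bar> * \<bar>c (m + 1)\<bar> \<le> \<bar>\<alpha>\<bar> * \<bar>c m\<bar>
      + \<beta> * (\<bar>conv c 1 m\<bar> + \<bar>\<eta>\<bar> * \<bar>conv c 1 (m + 1)\<bar> + \<sigma> * \<bar>conv c 2 (m + 2)\<bar>)"
proof -
  have "(\<Sum>j=1..m-1. c j * c (m - j)) = conv c 1 m"
    by (simp add: conv_def)
  moreover have "(\<Sum>j=0..m-1. c (j + 1) * c (m - j)) = conv c 1 (m + 1)"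
    by (rule conv_one_Suc_eq_sum[symmetric]) (use assms(4) in simp)
  moreover have "(\<Sum>j=0..m-1. c (j + 2) * c (m - j)) = conv c 2 (m + 2) + c (m + 1)"
    using assms(3,4) conv_two_Suc_Suc_eq_sum[of m c] by simp
  ultimately have "c (m + 1) = \<alpha> * c m
      + \<beta> * (conv c 1 m + \<eta> * conv c 1 (m + 1) + \<sigma> * (conv c 2 (m + 2) + c (m + 1)))"
    using rec by simp
  then have "(1 - \<beta> * \<sigma>) * c (m + 1)
      = \<alpha> * c m + \<beta> * (conv c 1 m + \<eta> * conv c 1 (m + 1) + \<sigma> * conv c 2 (m + 2))"
    by (simp add: algebra_simps)
  then have "\<bar>1 - \<beta> * \<sigma>\<bar> * \<bar>c (m + 1)\<bar>
      = \<bar>\<alpha> * c m + \<beta> * (conv c 1 m + \<eta> * conv c 1 (m + 1) + \<sigma> * conv c 2 (m + 2))\<bar>"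
    by (simp flip: abs_mult)
  also have "\<dots> \<le> \<bar>\<alpha>\<bar> * \<bar>c m\<bar>
      + \<beta> * \<bar>conv c 1 m + \<eta> * conv c 1 (m + 1) + \<sigma> * conv c 2 (m + 2)\<bar>"
    using abs_triangle_ineq assms(1) by (metis abs_mult abs_of_nonneg)
  also have "\<dots> \<le> \<bar>\<alpha>\<bar> * \<bar>c m\<bar>
      + \<beta> * (\<bar>conv c 1 m\<bar> + \<bar>\<eta>\<bar> * \<bar>conv c 1 (m + 1)\<bar> + \<sigma> * \<bar>conv c 2 (m + 2)\<bar>)"
    using abs_triangle_ineq[of "conv c 1 m + \<eta> * conv c 1 (m + 1)" "\<sigma> * conv c 2 (m + 2)"]
      abs_triangle_ineq[of "conv c 1 m" "\<eta> * conv c 1 (m + 1)"] assms(1,2)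
    by (intro add_left_mono mult_left_mono) (simp_all add: abs_mult)
  finally show ?thesis .
qed

lemma abs_mult_le_weighted:
  fixes c :: "nat \<Rightarrow> real"
  assumes "c 1 = 1" "1 \<le> D" "D \<le> M"
    and bound: "\<And>i. 2 \<le> i \<Longrightarrow> i \<le> m \<Longrightarrow> \<bar>c i\<bar> \<le> D * M ^ (i - 2) * inv_sq i"
    and "1 \<le> i" "1 \<le> j" "i \<le> m" "j \<le> m" "3 \<le> i + j"
  shows "\<bar>c i * c j\<bar> \<le> D * M ^ (i + j - 3) * (inv_sq i * inv_sq j)"
proof -
  consider "i = 1" | "j = 1" | "2 \<le> i" "2 \<le> j"
    using assms(5,6) by linarith
  then show ?thesis
  proof cases
    case 1
    then show ?thesis
      using bound[of j] assms by (simp add: inv_sq_def)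
  next
    case 2
    then show ?thesis
      using bound[of i] assms by (simp add: inv_sq_def)
  next
    case 3
    have "\<bar>c i * c j\<bar> \<le> (D * M ^ (i - 2) * inv_sq i) * (D * M ^ (j - 2) * inv_sq j)"
      unfolding abs_mult using bound[of i] bound[of j] 3 assms(7,8)
      by (intro mult_mono) auto
    also have "\<dots> = D * (D * M ^ (i - 2 + (j - 2))) * (inv_sq i * inv_sq j)"
      by (simp add: power_add)
    also have "\<dots> \<le> D * (M * M ^ (i - 2 + (j - 2))) * (inv_sq i * inv_sq j)"
      using assms(2,3) by (intro mult_right_mono mult_left_mono) (auto simp: inv_sq_nonneg)
    also have "M * M ^ (i - 2 + (j - 2)) = M ^ (i + j - 3)"
    proof -
      have "Suc (i - 2 + (j - 2)) = i + j - 3"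
        using 3 by simp
      then show ?thesis
        by (metis power_Suc)
    qed
    finally show ?thesis .
  qed
qed

lemma abs_conv_one_le_weighted:
  fixes c :: "nat \<Rightarrow> real"
  assumes "c 1 = 1" "1 \<le> D" "D \<le> M"
    and bound: "\<And>i. 2 \<le> i \<Longrightarrow> i \<le> m \<Longrightarrow> \<bar>c i\<bar> \<le> D * M ^ (i - 2) * inv_sq i"
    and "3 \<le> n" "n \<le> m + 1"
  shows "\<bar>conv c 1 n\<bar> \<le> 8 * (D * M ^ (n - 3)) * inv_sq n"
proof (rule abs_conv_le)
  fix i assume "1 \<le> i" "i \<le> n - 1"
  then show "\<bar>c i * c (n - i)\<bar> \<le> D * M ^ (n - 3) * (inv_sq i * inv_sq (n - i))"
    using abs_mult_le_weighted[where m = m, OF assms(1-3) bound, of i "n - i"] assms(5,6) by simp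
qed (use assms(2,3) in auto)

lemma abs_conv_two_le_weighted:
  fixes c :: "nat \<Rightarrow> real"
  assumes "0 \<le> M"
    and bound: "\<And>i. 2 \<le> i \<Longrightarrow> i \<le> m \<Longrightarrow> \<bar>c i\<bar> \<le> D * M ^ (i - 2) * inv_sq i"
    and "n \<le> m + 2"
  shows "\<bar>conv c 2 n\<bar> \<le> 8 * (D\<^sup>2 * M ^ (n - 4)) * inv_sq n"
proof (rule abs_conv_le)
  fix i assume i: "2 \<le> i" "i \<le> n - 2"
  then have "i \<le> m" "n - i \<le> m"
    using assms(3) by auto
  then have "\<bar>c i * c (n - i)\<bar> \<le> (D * M ^ (i - 2) * inv_sq i) * (D * M ^ (n - i - 2) * inv_sq (n - i))"
    unfolding abs_mult using bound[of i] bound[of "n - i"] i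
    by (intro mult_mono) (auto intro: order_trans[OF abs_ge_zero])
  also have "\<dots> = D\<^sup>2 * M ^ (i - 2 + (n - i - 2)) * (inv_sq i * inv_sq (n - i))"
    by (simp add: power_add power2_eq_square)
  also have "i - 2 + (n - i - 2) = n - 4"
    using i by simp
  finally show "\<bar>c i * c (n - i)\<bar> \<le> D\<^sup>2 * M ^ (n - 4) * (inv_sq i * inv_sq (n - i))" .
qed (use assms(1) in auto)

lemma weighted_bound_step:
  fixes c :: "nat \<Rightarrow> real"
  assumes "0 < Q" "0 \<le> \<beta>" "0 \<le> \<sigma>" "c 1 = 1" "1 \<le> D" "D \<le> M"
    and M_large: "4 * \<bar>\<alpha>\<bar> + \<beta> * (32 + 8 * \<bar>\<eta>\<bar> + 8 * \<sigma> * D) \<le> Q * M"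
    and m: "2 \<le> m"
    and rec: "Q * \<bar>c (m + 1)\<bar> \<le> \<bar>\<alpha>\<bar> * \<bar>c m\<bar>
      + \<beta> * (\<bar>conv c 1 m\<bar> + \<bar>\<eta>\<bar> * \<bar>conv c 1 (m + 1)\<bar> + \<sigma> * \<bar>conv c 2 (m + 2)\<bar>)"
    and bound: "\<And>i. 2 \<le> i \<Longrightarrow> i \<le> m \<Longrightarrow> \<bar>c i\<bar> \<le> D * M ^ (i - 2) * inv_sq i"
  shows "\<bar>c (m + 1)\<bar> \<le> D * M ^ (m - 1) * inv_sq (m + 1)"
proof -
  define U where "U = D * M ^ (m - 2) * inv_sq (m + 1)"
  have M1: "1 \<le> M"
    using assms(5,6) by simp
  have U_nonneg: "0 \<le> U"
    using assms(5) M1 by (simp add: U_def inv_sq_nonneg)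
  have decay: "D * M ^ (m - 2) * inv_sq m \<le> 4 * U"
    using inv_sq_le_4_inv_sq_Suc[of m] m assms(5) M1
    by (auto simp: U_def intro: order_trans[OF mult_left_mono])
  have c_m: "\<bar>c m\<bar> \<le> 4 * U"
    using bound[of m] m decay by simp
  have conv_m: "\<bar>conv c 1 m\<bar> \<le> 32 * U"
  proof (cases "m = 2")
    case True
    then show ?thesis
      using assms(4,5) by (simp add: conv_def U_def inv_sq_def)
  next
    case False
    have "\<bar>conv c 1 m\<bar> \<le> 8 * (D * M ^ (m - 3)) * inv_sq m"
      using abs_conv_one_le_weighted[where m = m, OF assms(4-6) bound] False m by simp
    also have "\<dots> \<le> 8 * (D * M ^ (m - 2) * inv_sq m)"
      using assms(5) M1 by (simp add: inv_sq_nonneg mult_right_mono power_increasing)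
    finally show ?thesis
      using decay by simp
  qed
  have conv_Suc_m: "\<bar>conv c 1 (m + 1)\<bar> \<le> 8 * U"
    using abs_conv_one_le_weighted[where m = m, OF assms(4-6) bound, of "m + 1"] m by (simp add: U_def)
  have conv_Suc_Suc_m: "\<bar>conv c 2 (m + 2)\<bar> \<le> 8 * D * U"
  proof -
    have "\<bar>conv c 2 (m + 2)\<bar> \<le> 8 * (D\<^sup>2 * M ^ (m - 2)) * inv_sq (m + 2)"
      using abs_conv_two_le_weighted[of M m c D "m + 2"] M1 bound by simp
    also have "\<dots> \<le> 8 * (D\<^sup>2 * M ^ (m - 2)) * inv_sq (m + 1)"
      using inv_sq_antimono[of "m + 1" "m + 2"] M1 by (intro mult_left_mono) auto
    finally show ?thesis
      by (simp add: U_def power2_eq_square)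
  qed
  note rec
  also have "\<bar>\<alpha>\<bar> * \<bar>c m\<bar>
      + \<beta> * (\<bar>conv c 1 m\<bar> + \<bar>\<eta>\<bar> * \<bar>conv c 1 (m + 1)\<bar> + \<sigma> * \<bar>conv c 2 (m + 2)\<bar>)
    \<le> \<bar>\<alpha>\<bar> * (4 * U) + \<beta> * (32 * U + \<bar>\<eta>\<bar> * (8 * U) + \<sigma> * (8 * D * U))"
    using c_m conv_m conv_Suc_m conv_Suc_Suc_m assms(2,3)
    by (intro add_mono mult_left_mono) auto
  also have "\<dots> = (4 * \<bar>\<alpha>\<bar> + \<beta> * (32 + 8 * \<bar>\<eta>\<bar> + 8 * \<sigma> * D)) * U"
    by (simp add: algebra_simps)
  also have "\<dots> \<le> Q * M * U"
    using M_large U_nonneg by (rule mult_right_mono)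
  finally have "\<bar>c (m + 1)\<bar> \<le> M * U"
    using assms(1) by (simp add: mult.assoc)
  also have "M * U = D * M ^ (m - 1) * inv_sq (m + 1)"
  proof -
    have "m - 1 = Suc (m - 2)"
      using m by simp
    then show ?thesis
      by (simp add: U_def)
  qed
  finally show ?thesis .
qed

lemma weighted_geometric_bound:
  fixes c :: "nat \<Rightarrow> real"
  assumes "0 < Q" "0 \<le> \<beta>" "0 \<le> \<sigma>" "c 1 = 1"
    and rec: "\<And>m. 2 \<le> m \<Longrightarrow> Q * \<bar>c (m + 1)\<bar> \<le> \<bar>\<alpha>\<bar> * \<bar>c m\<bar>
      + \<beta> * (\<bar>conv c 1 m\<bar> + \<bar>\<eta>\<bar> * \<bar>conv c 1 (m + 1)\<bar> + \<sigma> * \<bar>conv c 2 (m + 2)\<bar>)"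
  obtains D M where "1 \<le> D" "D \<le> M" "\<And>k. 2 \<le> k \<Longrightarrow> \<bar>c k\<bar> \<le> D * M ^ (k - 2) * inv_sq k"
proof -
  define D where "D = max 1 (4 * \<bar>c 2\<bar>)"
  define L where "L = 4 * \<bar>\<alpha>\<bar> + \<beta> * (32 + 8 * \<bar>\<eta>\<bar> + 8 * \<sigma> * D)"
  define M where "M = max D (L / Q)"
  have D: "1 \<le> D" "D \<le> M"
    by (simp_all add: D_def M_def)
  have "L / Q \<le> M"
    by (simp add: M_def)
  then have M_large: "L \<le> Q * M"
    using assms(1) by (simp add: pos_divide_le_eq mult.commute)
  have "\<bar>c k\<bar> \<le> D * M ^ (k - 2) * inv_sq k" if "2 \<le> k" for k
    using that
  proof (induction k rule: less_induct)
    case (less k)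
    show ?case
    proof (cases "k = 2")
      case True
      then show ?thesis
        by (simp add: D_def inv_sq_def)
    next
      case False
      define m where "m = k - 1"
      have m: "k = m + 1" "2 \<le> m"
        using less.prems False by (simp_all add: m_def)
      have "\<bar>c (m + 1)\<bar> \<le> D * M ^ (m - 1) * inv_sq (m + 1)"
        using less.IH m
        by (intro weighted_bound_step[OF assms(1-4) D M_large[unfolded L_def] m(2) rec[OF m(2)]])
          simp
      then show ?thesis
        using m by simp
    qed
  qed
  with D show ?thesis
    using that by blast
qed

lemma le_three_power: "3 \<le> k \<Longrightarrow> k \<le> 3 ^ (k - 2)"
proof (induction k rule: nat_induct_at_least)
  case base
  then show ?case by simp
next
  case (Suc k)
  have "Suc k - 2 = Suc (k - 2)"
    using Suc.hyps by simp
  with Suc show ?case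
    by simp
qed

lemma powr_bound_of_geometric_bound:
  fixes c :: "nat \<Rightarrow> real"
  assumes "1 \<le> C" "0 \<le> R" "0 \<le> p"
    and bound: "\<And>k. 3 \<le> k \<Longrightarrow> \<bar>c k\<bar> \<le> C * R ^ (k - 2)"
  shows "\<exists>M. \<forall>k\<ge>3. \<bar>c k\<bar> \<le> M ^ (k - 2) / real k powr p"
proof (intro exI allI impI)
  fix k :: nat assume k: "3 \<le> k"
  have "real k powr p \<le> (3 ^ (k - 2)) powr p"
  proof (rule powr_mono2)
    show "real k \<le> 3 ^ (k - 2)"
      using le_three_power[OF k] by (metis of_nat_le_iff of_nat_numeral of_nat_power)
  qed (use assms(3) in auto)
  also have "\<dots> = (3 powr p) ^ (k - 2)"
    by (simp add: powr_realpow[symmetric] powr_powr powr_power mult.commute)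
  finally have k_powr: "real k powr p \<le> (3 powr p) ^ (k - 2)" .
  have "\<bar>c k\<bar> * real k powr p \<le> C ^ (k - 2) * R ^ (k - 2) * (3 powr p) ^ (k - 2)"
  proof (rule mult_mono)
    have "C \<le> C ^ (k - 2)"
      using power_increasing[of 1 "k - 2" C] k assms(1) by simp
    then show "\<bar>c k\<bar> \<le> C ^ (k - 2) * R ^ (k - 2)"
      using bound[OF k] assms(2) by (meson mult_right_mono order_trans zero_le_power)
  qed (use k_powr assms in auto)
  also have "\<dots> = (C * R * 3 powr p) ^ (k - 2)"
    by (simp add: power_mult_distrib)
  finally show "\<bar>c k\<bar> \<le> (C * R * 3 powr p) ^ (k - 2) / real k powr p"
    using k by (simp add: pos_le_divide_eq)
qed

theorem lemma3p2:
  fixes \<eta> \<theta> \<sigma> \<tau> t :: real and c :: "nat \<Rightarrow> real"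
  assumes "\<sigma> \<ge> 0" and "\<tau> \<ge> 0" and "\<sigma> * \<tau> \<noteq> 1" and "t > 0"
    and "c 1 = 1"
    and rec: "\<And>k. k \<ge> 2 \<Longrightarrow>
      c (k + 1) = (\<theta> - \<eta> * t) / (1 + \<sigma> * t) * c k
        + (t + \<tau>) / (1 + \<sigma> * t) *
          ((\<Sum>j=1..k-1. c j * c (k - j))
           + \<eta> * (\<Sum>j=0..k-1. c (j + 1) * c (k - j))
           + \<sigma> * (\<Sum>j=0..k-1. c (j + 2) * c (k - j)))"
    and "p > (1::real)"
  shows "\<exists>M::real. \<forall>k\<ge>3. \<bar>c k\<bar> \<le> M ^ (k - 2) / real k powr p"
proof -
  define \<alpha> where "\<alpha> = (\<theta> - \<eta> * t) / (1 + \<sigma> * t)"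
  define \<beta> where "\<beta> = (t + \<tau>) / (1 + \<sigma> * t)"
  have denom_pos: "0 < 1 + \<sigma> * t"
    using assms(1,4) by (simp add: add_pos_nonneg)
  have \<beta>_nonneg: "0 \<le> \<beta>"
    using assms(2,4) denom_pos by (simp add: \<beta>_def)
  have "1 - \<beta> * \<sigma> = (1 - \<sigma> * \<tau>) / (1 + \<sigma> * t)"
    using denom_pos by (simp add: \<beta>_def field_simps)
  then have Q_pos: "0 < \<bar>1 - \<beta> * \<sigma>\<bar>"
    using assms(3) denom_pos by simp
  have recurrence_abs: "\<bar>1 - \<beta> * \<sigma>\<bar> * \<bar>c (m + 1)\<bar> \<le> \<bar>\<alpha>\<bar> * \<bar>c m\<bar>
      + \<beta> * (\<bar>conv c 1 m\<bar> + \<bar>\<eta>\<bar> * \<bar>conv c 1 (m + 1)\<bar> + \<sigma> * \<bar>conv c 2 (m + 2)\<bar>)"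
    if "2 \<le> m" for m
    by (rule abs_recurrence_le[where c = c, OF \<beta>_nonneg assms(1,5) that])
      (use rec[OF that] in \<open>simp only: \<alpha>_def \<beta>_def\<close>)
  obtain D M where "1 \<le> D" "D \<le> M" and weighted: "\<And>k. 2 \<le> k \<Longrightarrow> \<bar>c k\<bar> \<le> D * M ^ (k - 2) * inv_sq k"
    using weighted_geometric_bound[where c = c, OF Q_pos \<beta>_nonneg assms(1,5) recurrence_abs] by blast
  have "\<bar>c k\<bar> \<le> D * M ^ (k - 2)" if "3 \<le> k" for k
  proof -
    have "D * M ^ (k - 2) * inv_sq k \<le> D * M ^ (k - 2)"
      using inv_sq_le_1[of k] that \<open>1 \<le> D\<close> \<open>D \<le> M\<close> by (intro mult_left_le) auto
    with weighted[of k] that show ?thesis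
      by simp
  qed
  then show ?thesis
    using powr_bound_of_geometric_bound[of D M p c] \<open>1 \<le> D\<close> \<open>D \<le> M\<close> \<open>p > 1\<close> by simp
qed

end
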